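(* For every $n\ge w\ge 1$ there exists a simple graph on $n$ nodes such that every $w$-cut sparsifier of it has $\Omega(nw)$ edges.
   Context: A sparsifier of $G$ is a graph $H$ obtained by deleting edges and contracting subsets of nodes (self-loops removed, parallel edges kept and counted separately). $H$ is a $w$-cut sparsifier of $G$ if it preserves every cut of $G$ with at most $w$ edges, meaning that none of the cut's edges is deleted and no two nodes from different sides of the cut are contracted together. *)

theory Defs
  imports Complex_Main
begin

definition simple_graph :: "'a set \<Rightarrow> 'a set set \<Rightarrow> bool" where
  "simple_graph V E \<longleftrightarrow> finite V \<and> (\<forall>e\<in>E. e \<subseteq> V \<and> card e = 2)"

definition cut_edges :: "'a set set \<Rightarrow> 'a set \<Rightarrow> 'a set set" where
  "cut_edges E S = {e \<in> E. e \<inter> S \<noteq> {} \<and> e - S \<noteq> {}}"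

text \<open>A sparsifier H of G = (V,E) is given by the set F of non-deleted edges
  (F \<subseteq> E) and a contraction map f (nodes u, v of V are contracted together
  iff f u = f v).  The edges of H are the kept edges whose endpoints are not
  contracted together (self-loops removed); parallel edges of H come from
  distinct edges of G and are thus counted separately.\<close>
definition sparsifier_edges :: "'a set set \<Rightarrow> ('a \<Rightarrow> 'b) \<Rightarrow> 'a set set" where
  "sparsifier_edges F f = {e \<in> F. card (f ` e) = 2}"

definition is_w_cut_sparsifier ::
  "'a set \<Rightarrow> 'a set set \<Rightarrow> nat \<Rightarrow> ('a \<Rightarrow> 'b) \<Rightarrow> 'a set set \<Rightarrow> bool" where
  "is_w_cut_sparsifier V E w f F \<longleftrightarrow>
     F \<subseteq> E \<and>
     (\<forall>S \<subseteq> V. card (cut_edges E S) \<le> w \<longrightarrow>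
        cut_edges E S \<subseteq> F \<and>
        (\<forall>u\<in>V. \<forall>v\<in>V. f u = f v \<longrightarrow> (u \<in> S \<longleftrightarrow> v \<in> S)))"

end

theory Submission
  imports Defs
begin

text \<open>If every node has degree at most w, each edge lies in the cut around one of its
  endpoints, a cut with at most w edges. A w-cut sparsifier must therefore keep every
  edge and may not contract its endpoints, so it has as many edges as the graph itself.
  A bipartite band graph on n nodes with maximum degree about w/4 and about n w/16 edges
  then gives the bound.\<close>

lemma sparsifier_edges_eq_if_degrees_le:
  assumes sparsifier: "is_w_cut_sparsifier V E w f F"
    and graph: "simple_graph V E"
    and degree: "\<And>v. v \<in> V \<Longrightarrow> card (cut_edges E {v}) \<le> w"
  shows "sparsifier_edges F f = E"
proof
  show "sparsifier_edges F f \<subseteq> E"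
    using sparsifier unfolding is_w_cut_sparsifier_def sparsifier_edges_def by blast
next
  show "E \<subseteq> sparsifier_edges F f"
  proof
    fix e assume "e \<in> E"
    with graph obtain x y where e: "e = {x, y}" "x \<noteq> y" "x \<in> V" "y \<in> V"
      unfolding simple_graph_def by (metis card_2_iff insert_subset)
    have "{x} \<subseteq> V" "card (cut_edges E {x}) \<le> w" using e degree by auto
    with sparsifier have kept: "cut_edges E {x} \<subseteq> F"
      and separated: "\<forall>u\<in>V. \<forall>v\<in>V. f u = f v \<longrightarrow> (u \<in> {x} \<longleftrightarrow> v \<in> {x})"
      unfolding is_w_cut_sparsifier_def by blast+
    have "e \<in> cut_edges E {x}" using \<open>e \<in> E\<close> e unfolding cut_edges_def by auto
    moreover have "f x \<noteq> f y" using separated e by auto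
    ultimately show "e \<in> sparsifier_edges F f"
      using kept e unfolding sparsifier_edges_def by auto
  qed
qed

definition band_edges :: "nat \<Rightarrow> nat \<Rightarrow> nat set set" where
  "band_edges p q = (\<lambda>(a, k). {2*a, 2*(a+k)+1}) ` ({..<p} \<times> {..<q})"

lemma card_band_edges: "card (band_edges p q) = p * q"
proof -
  have "inj_on (\<lambda>(a, k). {2*a, 2*(a+k)+(1::nat)}) ({..<p} \<times> {..<q})"
  proof (rule inj_onI, clarify)
    fix a k b l :: nat
    assume eq: "{2*a, 2*(a+k)+1} = {2*b, 2*(b+l)+1}"
    then have "2*a = 2*b \<or> 2*a = 2*(b+l)+1" by blast
    then have "a = b" by presburger
    moreover from eq have "2*(a+k)+1 = 2*b \<or> 2*(a+k)+1 = 2*(b+l)+1" by blast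
    ultimately show "a = b \<and> k = l" by presburger
  qed
  then show ?thesis
    unfolding band_edges_def by (simp add: card_image card_cartesian_product)
qed

lemma simple_graph_band_edges:
  assumes "2*(p+q) \<le> n + 2"
  shows "simple_graph {0..<n} (band_edges p q)"
  unfolding simple_graph_def band_edges_def
proof (intro conjI ballI)
  fix e assume "e \<in> (\<lambda>(a, k). {2*a, 2*(a+k)+1}) ` ({..<p} \<times> {..<q})"
  then obtain a k where e: "e = {2*a, 2*(a+k)+1}" "a < p" "k < q" by auto
  then show "e \<subseteq> {0..<n}" using assms by auto
  have "2*a \<noteq> 2*(a+k)+1" by presburger
  then show "card e = 2" using e by simp
qed simp

lemma card_cut_edges_singleton_band_edges: "card (cut_edges (band_edges p q) {u}) \<le> q"
proof -
  let ?edge = "\<lambda>k. if even u then {u, u+2*k+1} else {u-2*k-1, u}"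
  have "cut_edges (band_edges p q) {u} \<subseteq> ?edge ` {..<q}"
  proof
    fix e assume "e \<in> cut_edges (band_edges p q) {u}"
    then obtain a k where e: "e = {2*a, 2*(a+k)+1}" "k < q" and "u \<in> e"
      unfolding cut_edges_def band_edges_def by auto
    then have "u = 2*a \<or> u = 2*(a+k)+1" by auto
    then have "e = ?edge k" using e by auto
    then show "e \<in> ?edge ` {..<q}" using e by auto
  qed
  then have "card (cut_edges (band_edges p q) {u}) \<le> card (?edge ` {..<q})"
    by (intro card_mono) auto
  also have "\<dots> \<le> q" using card_image_le[of "{..<q}" ?edge] by simp
  finally show ?thesis .
qed

theorem mainTheorem6:
  shows "\<exists>c::real. c > 0 \<and> (\<exists>N::nat. \<forall>n w::nat. N \<le> n \<and> 1 \<le> w \<and> w \<le> n \<longrightarrow>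
     (\<exists>E :: nat set set. simple_graph {0..<n} E \<and>
        (\<forall>(f :: nat \<Rightarrow> nat) F. is_w_cut_sparsifier {0..<n} E w f F \<longrightarrow>
            real (card (sparsifier_edges F f)) \<ge> c * real n * real w)))"
proof (intro exI[of _ "1/32"] conjI exI[of _ 4] allI impI)
  fix n w :: nat assume nw: "4 \<le> n \<and> 1 \<le> w \<and> w \<le> n"
  define p where "p = n div 4"
  define q where "q = (w + 3) div 4"
  have fits: "2*(p+q) \<le> n + 2" using nw unfolding p_def q_def by presburger
  have "q \<le> w" unfolding q_def by presburger
  have "n \<le> 8*p" using nw unfolding p_def by presburger
  moreover have "w \<le> 4*q" unfolding q_def by presburger
  ultimately have "n * w \<le> (8*p) * (4*q)" by (rule mult_le_mono)
  then have "n * w \<le> 32 * (p * q)" by simp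
  then have size: "real n * real w \<le> 32 * real (p * q)"
    by (metis of_nat_le_iff of_nat_mult of_nat_numeral)
  show "\<exists>E. simple_graph {0..<n} E \<and> (\<forall>(f :: nat \<Rightarrow> nat) F. is_w_cut_sparsifier {0..<n} E w f F \<longrightarrow>
            real (card (sparsifier_edges F f)) \<ge> 1/32 * real n * real w)"
  proof (intro exI[of _ "band_edges p q"] conjI allI impI)
    show graph: "simple_graph {0..<n} (band_edges p q)" using simple_graph_band_edges[OF fits] .
    fix f :: "nat \<Rightarrow> nat" and F assume "is_w_cut_sparsifier {0..<n} (band_edges p q) w f F"
    then have "sparsifier_edges F f = band_edges p q"
      using graph card_cut_edges_singleton_band_edges \<open>q \<le> w\<close>
      by (intro sparsifier_edges_eq_if_degrees_le) (auto intro: le_trans)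
    then show "real (card (sparsifier_edges F f)) \<ge> 1/32 * real n * real w"
      using size by (simp add: card_band_edges)
  qed
qed simp

end
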